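(* The intersection graph $G$ of $n$ objects in the plane, each of which is either a horizontal line segment or a vertical line, admits a $3$-hop spanner $\widehat{G}$ with $O(n)$ edges.
   Context: The intersection graph has the objects as vertices, with an edge iff the two objects intersect. For a graph $G$ and integer $t\ge1$, a $t$-hop spanner is a subgraph $\widehat{G}$ of $G$ on the same vertex set such that for every edge $uv\in E(G)$ there is a $u$–$v$ path in $\widehat{G}$ with at most $t$ edges. *)

theory Defs
  imports Main "HOL-Library.Library"
begin

definition hseg :: "real \<Rightarrow> real \<Rightarrow> real \<Rightarrow> (real \<times> real) set" where
  "hseg a b c = {p. a \<le> fst p \<and> fst p \<le> b \<and> snd p = c}"

definition vline :: "real \<Rightarrow> (real \<times> real) set" where
  "vline c = {p. fst p = c}"

definition hseg_or_vline :: "(real \<times> real) set \<Rightarrow> bool" where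
  "hseg_or_vline S \<longleftrightarrow> (\<exists>a b c. a \<le> b \<and> S = hseg a b c) \<or> (\<exists>c. S = vline c)"

definition intersection_graph :: "'v set \<Rightarrow> ('v \<Rightarrow> 'p set) \<Rightarrow> 'v set set" where
  "intersection_graph V obj =
     {{u, v} | u v. u \<in> V \<and> v \<in> V \<and> u \<noteq> v \<and> obj u \<inter> obj v \<noteq> {}}"

definition hop_connected :: "'v set set \<Rightarrow> nat \<Rightarrow> 'v \<Rightarrow> 'v \<Rightarrow> bool" where
  "hop_connected H t u v \<longleftrightarrow>
     (\<exists>xs. xs \<noteq> [] \<and> hd xs = u \<and> last xs = v \<and> length xs \<le> t + 1 \<and>
           (\<forall>i. i + 1 < length xs \<longrightarrow> {xs ! i, xs ! (i + 1)} \<in> H))"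

definition is_hop_spanner :: "'v set set \<Rightarrow> 'v set set \<Rightarrow> nat \<Rightarrow> bool" where
  "is_hop_spanner E H t \<longleftrightarrow> H \<subseteq> E \<and> (\<forall>u v. {u, v} \<in> E \<longrightarrow> hop_connected H t u v)"

end

theory Submission
  imports Defs
begin

(*
  Vertical lines meet iff they are equal, so every class of equal lines is spanned by a star,
  with 2 hops.  Horizontal segments are handled through sparse covers: among the subfamilies of
  a finite family of intervals that cover its union, one of minimum size meets every interval of
  the family in at most three members, since an interval meeting four members could replace
  them together with the member reaching furthest left and the one reaching furthest right.
  On each horizontal line, joining every segment to the cover members it meets yields a 2-hop
  path between two overlapping segments through a member containing a common point.  For the
  crossings, fix such a cover S of all segments, attach every vertical line p to a member of S
  containing its abscissa, and for each segment h and each of the at most three members C of S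
  met by h, join h to one line q attached to C that crosses h.  If p crosses h, this gives the
  3-hop path h, q, C, p.  With m lines and k segments this uses at most 2 m + 6 k edges.
*)

section \<open>Hop connectivity\<close>

lemma hop_connected_0: "hop_connected H 0 u v \<longleftrightarrow> u = v"
proof
  assume "hop_connected H 0 u v"
  then obtain xs where "xs \<noteq> []" "hd xs = u" "last xs = v" "length xs \<le> 1"
    unfolding hop_connected_def by auto
  then show "u = v" by (cases xs) auto
qed (auto simp: hop_connected_def intro!: exI[of _ "[v]"])

lemma hop_connected_Suc:
  "hop_connected H (Suc t) u v \<longleftrightarrow> u = v \<or> (\<exists>x. {u, x} \<in> H \<and> hop_connected H t x v)"
proof
  assume "hop_connected H (Suc t) u v"
  then obtain xs where xs: "xs \<noteq> []" "hd xs = u" "last xs = v" "length xs \<le> t + 2"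
    and edges: "\<And>i. i + 1 < length xs \<Longrightarrow> {xs ! i, xs ! (i + 1)} \<in> H"
    unfolding hop_connected_def by auto
  show "u = v \<or> (\<exists>x. {u, x} \<in> H \<and> hop_connected H t x v)"
  proof (cases "tl xs = []")
    case True
    then show ?thesis using xs by (cases xs) auto
  next
    case False
    then obtain ys where ys: "xs = u # ys" "ys \<noteq> []" using xs by (cases xs) auto
    have "{u, hd ys} \<in> H" using edges[of 0] ys by (simp add: hd_conv_nth)
    moreover have "hop_connected H t (hd ys) v"
      unfolding hop_connected_def
      using xs ys edges[of "Suc _"] by (intro exI[of _ ys]) auto
    ultimately show ?thesis by blast
  qed
next
  assume "u = v \<or> (\<exists>x. {u, x} \<in> H \<and> hop_connected H t x v)"
  then show "hop_connected H (Suc t) u v"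
  proof
    assume "u = v"
    then show ?thesis unfolding hop_connected_def by (intro exI[of _ "[u]"]) auto
  next
    assume "\<exists>x. {u, x} \<in> H \<and> hop_connected H t x v"
    then obtain x xs where ux: "{u, x} \<in> H" and xs: "xs \<noteq> []" "hd xs = x" "last xs = v"
      "length xs \<le> t + 1" and edges: "\<forall>i. i + 1 < length xs \<longrightarrow> {xs ! i, xs ! (i + 1)} \<in> H"
      unfolding hop_connected_def by auto
    have "{(u # xs) ! i, (u # xs) ! (i + 1)} \<in> H" if "i + 1 < length (u # xs)" for i
      using that ux xs edges by (cases i) (auto simp: hd_conv_nth)
    then show ?thesis
      unfolding hop_connected_def using xs by (intro exI[of _ "u # xs"]) auto
  qed
qed

lemma hop_connected_1: "hop_connected H 1 u v \<longleftrightarrow> u = v \<or> {u, v} \<in> H"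
  by (simp add: hop_connected_Suc hop_connected_0)

lemma hop_connected_refl: "hop_connected H t u u"
  by (cases t) (simp_all add: hop_connected_0 hop_connected_Suc)

lemma hop_connected_mono:
  "hop_connected H s u v \<Longrightarrow> s \<le> t \<Longrightarrow> hop_connected H t u v"
proof (induction s arbitrary: u t)
  case 0
  then show ?case by (simp add: hop_connected_0 hop_connected_refl)
next
  case (Suc s)
  obtain t' where t: "t = Suc t'" "s \<le> t'" using Suc.prems(2) by (cases t) auto
  from Suc.prems(1) consider "u = v" | x where "{u, x} \<in> H" "hop_connected H s x v"
    by (auto simp: hop_connected_Suc)
  then show ?case
  proof cases
    case 1
    then show ?thesis by (simp add: hop_connected_refl)
  next
    case 2
    then show ?thesis using Suc.IH[OF 2(2) t(2)] t(1) by (auto simp: hop_connected_Suc)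
  qed
qed

lemma hop_connected_trans:
  "hop_connected H s u x \<Longrightarrow> hop_connected H t x v \<Longrightarrow> hop_connected H (s + t) u v"
proof (induction s arbitrary: u)
  case 0
  then show ?case by (simp add: hop_connected_0)
next
  case (Suc s)
  from Suc.prems(1) consider "u = x" | y where "{u, y} \<in> H" "hop_connected H s y x"
    by (auto simp: hop_connected_Suc)
  then show ?case
  proof cases
    case 1
    have "hop_connected H (Suc s + t) x v" using hop_connected_mono[OF Suc.prems(2)] by simp
    then show ?thesis using 1 by simp
  next
    case 2
    have "hop_connected H (s + t) y v" using Suc.IH[OF 2(2) Suc.prems(2)] .
    then show ?thesis unfolding add_Suc hop_connected_Suc using 2(1) by blast
  qed
qed

lemma hop_connected_sym: "hop_connected H t u v \<Longrightarrow> hop_connected H t v u"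
proof (induction t arbitrary: u)
  case 0
  then show ?case by (simp add: hop_connected_0)
next
  case (Suc t)
  from Suc.prems consider "u = v" | x where "{u, x} \<in> H" "hop_connected H t x v"
    by (auto simp: hop_connected_Suc)
  then show ?case
  proof cases
    case 1
    then show ?thesis by (simp add: hop_connected_refl)
  next
    case 2
    have "hop_connected H t v x" using Suc.IH[OF 2(2)] .
    moreover have "hop_connected H 1 x u"
      unfolding hop_connected_1 using 2(1) by (simp add: insert_commute)
    ultimately have "hop_connected H (t + 1) v u" by (rule hop_connected_trans)
    then show ?thesis by simp
  qed
qed

lemma hop_connected_2I:
  "hop_connected H 1 u x \<Longrightarrow> hop_connected H 1 x v \<Longrightarrow> hop_connected H 2 u v"
  using hop_connected_trans[of H 1 u x 1 v] by (simp add: numeral_2_eq_2)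

lemma hop_connected_subset:
  "hop_connected H t u v \<Longrightarrow> H \<subseteq> H' \<Longrightarrow> hop_connected H' t u v"
  unfolding hop_connected_def by (elim exE conjE) (intro exI conjI allI impI; auto)

lemma is_hop_spanner_Un:
  assumes "is_hop_spanner E1 H1 t" and "is_hop_spanner E2 H2 t"
  shows "is_hop_spanner (E1 \<union> E2) (H1 \<union> H2) t"
  unfolding is_hop_spanner_def
proof (intro conjI allI impI)
  show "H1 \<union> H2 \<subseteq> E1 \<union> E2" using assms unfolding is_hop_spanner_def by blast
next
  fix u v assume "{u, v} \<in> E1 \<union> E2"
  then have "hop_connected H1 t u v \<or> hop_connected H2 t u v"
    using assms unfolding is_hop_spanner_def by blast
  then show "hop_connected (H1 \<union> H2) t u v"
    using hop_connected_subset[of H1 t u v "H1 \<union> H2"] hop_connected_subset[of H2 t u v "H1 \<union> H2"]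
    by blast
qed

lemma is_hop_spanner_mono:
  "is_hop_spanner E H s \<Longrightarrow> s \<le> t \<Longrightarrow> is_hop_spanner E H t"
  unfolding is_hop_spanner_def by (auto intro: hop_connected_mono)

lemma is_hop_spanner_relI:
  assumes "H \<subseteq> {{u, v} | u v. R u v}" and conn: "\<And>u v. R u v \<Longrightarrow> hop_connected H t u v"
  shows "is_hop_spanner {{u, v} | u v. R u v} H t"
  unfolding is_hop_spanner_def
proof (intro conjI allI impI)
  fix u v assume "{u, v} \<in> {{u, v} | u v. R u v}"
  then obtain u' v' where "{u, v} = {u', v'}" "R u' v'"
    unfolding mem_Collect_eq by (elim exE conjE) (rule that)
  then have "(u = u' \<and> v = v') \<or> (u = v' \<and> v = u')" and "hop_connected H t u' v'"
    using conn by (simp_all add: doubleton_eq_iff)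
  then show "hop_connected H t u v" by (auto intro: hop_connected_sym)
qed (use assms in blast)

section \<open>Sparse interval covers\<close>

definition interval_cover :: "'i set \<Rightarrow> ('i \<Rightarrow> 'a::linorder) \<Rightarrow> ('i \<Rightarrow> 'a) \<Rightarrow> 'i set \<Rightarrow> bool" where
  "interval_cover I lo hi S \<longleftrightarrow>
     S \<subseteq> I \<and> (\<forall>h\<in>I. {lo h..hi h} \<subseteq> (\<Union>C\<in>S. {lo C..hi C}))"

lemma interval_cover_exchange:
  fixes lo hi :: "'i \<Rightarrow> 'a::linorder"
  assumes cover: "interval_cover I lo hi S" and h: "h \<in> I"
    and M: "finite M" "M \<noteq> {}" "M \<subseteq> S"
    and meets: "\<And>C. C \<in> M \<Longrightarrow> {lo C..hi C} \<inter> {lo h..hi h} \<noteq> {}"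
  shows "\<exists>l r. interval_cover I lo hi (S - M \<union> {l, h, r})"
proof -
  have "Min (lo ` M) \<in> lo ` M" "Max (hi ` M) \<in> hi ` M" using M by (intro Min_in Max_in; simp)+
  then obtain l r where l: "l \<in> M" "lo l = Min (lo ` M)" and r: "r \<in> M" "hi r = Max (hi ` M)"
    by (metis imageE)
  have around_h: "x \<in> {lo l..hi l} \<union> {lo h..hi h} \<union> {lo r..hi r}"
    if "C \<in> M" "x \<in> {lo C..hi C}" for C x
  proof -
    have "lo l \<le> lo C" "hi C \<le> hi r" using l r that(1) M(1) by simp_all
    then have "lo l \<le> x" "x \<le> hi r" using that(2) by auto
    moreover have "lo h \<le> hi l" "lo r \<le> hi h" using meets[OF l(1)] meets[OF r(1)] by auto
    ultimately show ?thesis by auto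
  qed
  have "interval_cover I lo hi (S - M \<union> {l, h, r})"
    unfolding interval_cover_def
  proof (intro conjI ballI)
    show "S - M \<union> {l, h, r} \<subseteq> I"
      using cover h l(1) r(1) M(3) unfolding interval_cover_def by blast
  next
    fix g assume "g \<in> I"
    show "{lo g..hi g} \<subseteq> (\<Union>C \<in> S - M \<union> {l, h, r}. {lo C..hi C})"
    proof
      fix x assume "x \<in> {lo g..hi g}"
      then obtain C where "C \<in> S" "x \<in> {lo C..hi C}"
        using cover \<open>g \<in> I\<close> unfolding interval_cover_def by blast
      then show "x \<in> (\<Union>C \<in> S - M \<union> {l, h, r}. {lo C..hi C})"
        using around_h[of C x] by (cases "C \<in> M") auto
    qed
  qed
  then show ?thesis by blast
qed

lemma sparse_interval_cover_exists:
  fixes lo hi :: "'i \<Rightarrow> 'a::linorder"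
  assumes "finite I"
  shows "\<exists>S. interval_cover I lo hi S \<and>
     (\<forall>h\<in>I. card {C\<in>S. {lo C..hi C} \<inter> {lo h..hi h} \<noteq> {}} \<le> 3)"
proof -
  have "interval_cover I lo hi I" unfolding interval_cover_def by blast
  then obtain S where S: "interval_cover I lo hi S"
    and min: "\<And>S'. interval_cover I lo hi S' \<Longrightarrow> card S \<le> card S'"
    using ex_has_least_nat[where P = "interval_cover I lo hi" and m = card] by blast
  have fin: "finite S" using S assms finite_subset unfolding interval_cover_def by blast
  have "card M \<le> 3" if h: "h \<in> I" and M: "M = {C\<in>S. {lo C..hi C} \<inter> {lo h..hi h} \<noteq> {}}" for h M
  proof (rule ccontr)
    assume many: "\<not> card M \<le> 3"
    have finM: "finite M" and MS: "M \<subseteq> S" using M fin by auto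
    have "M \<noteq> {}" using many by auto
    moreover have "\<And>C. C \<in> M \<Longrightarrow> {lo C..hi C} \<inter> {lo h..hi h} \<noteq> {}" using M by blast
    ultimately obtain l r where cover': "interval_cover I lo hi (S - M \<union> {l, h, r})"
      using interval_cover_exchange[OF S h finM _ MS] by blast
    have "card S \<le> card (S - M \<union> {l, h, r})" using min[OF cover'] .
    also have "\<dots> \<le> card (S - M) + card {l, h, r}" by (rule card_Un_le)
    also have "\<dots> \<le> card (S - M) + 3" by (simp add: card_insert_if)
    also have "card (S - M) = card S - card M" using finM MS by (rule card_Diff_subset)
    finally show False using many card_mono[OF fin MS] by linarith
  qed
  then show ?thesis using S by blast
qed

lemma sparse_interval_covers_by_key:
  fixes A :: "'v set" and key :: "'v \<Rightarrow> 'k" and lo hi :: "'v \<Rightarrow> 'a::linorder"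
  assumes "finite A"
  obtains S where "\<And>k C. C \<in> S k \<Longrightarrow> C \<in> A \<and> key C = k"
    and "\<And>h. h \<in> A \<Longrightarrow> {lo h..hi h} \<subseteq> (\<Union>C\<in>S (key h). {lo C..hi C})"
    and "\<And>h. h \<in> A \<Longrightarrow> card {C\<in>S (key h). {lo C..hi C} \<inter> {lo h..hi h} \<noteq> {}} \<le> 3"
proof -
  define fiber where "fiber k = {h\<in>A. key h = k}" for k
  have "\<forall>k. \<exists>S. interval_cover (fiber k) lo hi S \<and>
          (\<forall>h\<in>fiber k. card {C\<in>S. {lo C..hi C} \<inter> {lo h..hi h} \<noteq> {}} \<le> 3)"
    using assms by (intro allI sparse_interval_cover_exists) (simp add: fiber_def)
  from choice[OF this] obtain S where S: "\<forall>k. interval_cover (fiber k) lo hi (S k) \<and>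
          (\<forall>h\<in>fiber k. card {C\<in>S k. {lo C..hi C} \<inter> {lo h..hi h} \<noteq> {}} \<le> 3)"
    by blast
  have in_fiber: "h \<in> fiber (key h)" if "h \<in> A" for h using that unfolding fiber_def by simp
  show thesis
  proof (rule that)
    fix k C assume "C \<in> S k"
    then show "C \<in> A \<and> key C = k" using S unfolding interval_cover_def fiber_def by blast
  next
    fix h assume "h \<in> A"
    then show "{lo h..hi h} \<subseteq> (\<Union>C\<in>S (key h). {lo C..hi C})"
      using S in_fiber unfolding interval_cover_def by blast
  next
    fix h assume "h \<in> A"
    then show "card {C\<in>S (key h). {lo C..hi C} \<inter> {lo h..hi h} \<noteq> {}} \<le> 3"
      using S in_fiber by blast
  qed
qed

lemma card_UN_image_le:
  assumes "finite A" and "\<And>h. h \<in> A \<Longrightarrow> finite (S h)" and "\<And>h. h \<in> A \<Longrightarrow> card (S h) \<le> k"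
  shows "card (\<Union>h\<in>A. f h ` S h) \<le> k * card A"
proof -
  have "card (\<Union>h\<in>A. f h ` S h) \<le> (\<Sum>h\<in>A. card (f h ` S h))"
    using assms(1) by (rule card_UN_le)
  also have "\<dots> \<le> (\<Sum>h\<in>A. k)"
    using assms(2,3) by (intro sum_mono order_trans[OF card_image_le]) simp_all
  finally show ?thesis by (simp add: mult.commute)
qed

section \<open>Spanners for the three kinds of intersections\<close>

lemma same_key_hop_spanner:
  fixes L :: "'v set" and key :: "'v \<Rightarrow> 'k"
  assumes "finite L"
  shows "\<exists>H. is_hop_spanner {{u, v} | u v. u \<in> L \<and> v \<in> L \<and> u \<noteq> v \<and> key u = key v} H 2 \<and>
             card H \<le> card L"
proof -
  define rep where "rep k = (SOME u. u \<in> L \<and> key u = k)" for k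
  have rep: "rep (key v) \<in> L \<and> key (rep (key v)) = key v" if "v \<in> L" for v
    unfolding rep_def by (rule someI_ex) (use that in blast)
  define H where "H = (\<lambda>v. {v, rep (key v)}) ` {v\<in>L. v \<noteq> rep (key v)}"
  have "card H \<le> card L"
    unfolding H_def using assms by (intro card_image_le[THEN order_trans] card_mono) auto
  moreover have "is_hop_spanner {{u, v} | u v. u \<in> L \<and> v \<in> L \<and> u \<noteq> v \<and> key u = key v} H 2"
  proof (rule is_hop_spanner_relI)
    show "H \<subseteq> {{u, v} | u v. u \<in> L \<and> v \<in> L \<and> u \<noteq> v \<and> key u = key v}"
    proof
      fix e assume "e \<in> H"
      then obtain v where "v \<in> L" "v \<noteq> rep (key v)" "e = {v, rep (key v)}"
        unfolding H_def by blast
      then show "e \<in> {{u, v} | u v. u \<in> L \<and> v \<in> L \<and> u \<noteq> v \<and> key u = key v}"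
        unfolding mem_Collect_eq using rep[of v]
        by (intro exI[of _ v] exI[of _ "rep (key v)"]) simp
    qed
  next
    have to_rep: "hop_connected H 1 v (rep (key v))" if "v \<in> L" for v
      unfolding hop_connected_1 H_def using that by blast
    fix u v assume uv: "u \<in> L \<and> v \<in> L \<and> u \<noteq> v \<and> key u = key v"
    then have "hop_connected H 1 u (rep (key u))" "hop_connected H 1 (rep (key u)) v"
      using to_rep[of u] to_rep[of v, THEN hop_connected_sym] by simp_all
    then show "hop_connected H 2 u v" by (rule hop_connected_2I)
  qed
  ultimately show ?thesis by blast
qed

lemma overlapping_intervals_hop_spanner:
  fixes A :: "'v set" and key :: "'v \<Rightarrow> 'k" and lo hi :: "'v \<Rightarrow> 'a::linorder"
  assumes "finite A"
  shows "\<exists>H. is_hop_spanner {{g, h} | g h. g \<in> A \<and> h \<in> A \<and> g \<noteq> h \<and> key g = key h \<and>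
                                  {lo g..hi g} \<inter> {lo h..hi h} \<noteq> {}} H 2 \<and>
             card H \<le> 3 * card A"
proof -
  obtain S where S_key: "\<And>k C. C \<in> S k \<Longrightarrow> C \<in> A \<and> key C = k"
    and cover: "\<And>h. h \<in> A \<Longrightarrow> {lo h..hi h} \<subseteq> (\<Union>C\<in>S (key h). {lo C..hi C})"
    and sparse: "\<And>h. h \<in> A \<Longrightarrow> card {C\<in>S (key h). {lo C..hi C} \<inter> {lo h..hi h} \<noteq> {}} \<le> 3"
    using sparse_interval_covers_by_key[OF assms] by blast
  define meets where "meets h = {C\<in>S (key h). C \<noteq> h \<and> {lo C..hi C} \<inter> {lo h..hi h} \<noteq> {}}" for h
  define H where "H = (\<Union>h\<in>A. (\<lambda>C. {h, C}) ` meets h)"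
  have S_finite: "finite (S k)" for k
    using finite_subset[OF _ assms, of "S k"] S_key by blast
  have meets_finite: "finite (meets h)" for h
    using S_finite unfolding meets_def by simp
  have card_meets: "card (meets h) \<le> 3" if "h \<in> A" for h
  proof -
    have "card (meets h) \<le> card {C\<in>S (key h). {lo C..hi C} \<inter> {lo h..hi h} \<noteq> {}}"
      using S_finite unfolding meets_def by (intro card_mono) auto
    then show ?thesis using sparse[OF that] by linarith
  qed
  have "card H \<le> 3 * card A"
    unfolding H_def by (rule card_UN_image_le[OF assms]) (simp_all add: meets_finite card_meets)
  moreover have "is_hop_spanner {{g, h} | g h. g \<in> A \<and> h \<in> A \<and> g \<noteq> h \<and> key g = key h \<and>
                                  {lo g..hi g} \<inter> {lo h..hi h} \<noteq> {}} H 2"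
  proof (rule is_hop_spanner_relI)
    show "H \<subseteq> {{g, h} | g h. g \<in> A \<and> h \<in> A \<and> g \<noteq> h \<and> key g = key h \<and>
                              {lo g..hi g} \<inter> {lo h..hi h} \<noteq> {}}"
    proof
      fix e assume "e \<in> H"
      then obtain h C where "h \<in> A" "C \<in> meets h" "e = {h, C}" unfolding H_def by blast
      then show "e \<in> {{g, h} | g h. g \<in> A \<and> h \<in> A \<and> g \<noteq> h \<and> key g = key h \<and>
                                  {lo g..hi g} \<inter> {lo h..hi h} \<noteq> {}}"
        unfolding mem_Collect_eq meets_def using S_key[of C "key h"]
        by (intro exI[of _ C] exI[of _ h]) (simp add: insert_commute)
    qed
  next
    have to_cover: "hop_connected H 1 h C"
      if "h \<in> A" "C \<in> S (key h)" "x \<in> {lo C..hi C}" "x \<in> {lo h..hi h}" for h C x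
      unfolding hop_connected_1 H_def meets_def using that by blast
    fix g h assume gh: "g \<in> A \<and> h \<in> A \<and> g \<noteq> h \<and> key g = key h \<and> {lo g..hi g} \<inter> {lo h..hi h} \<noteq> {}"
    then obtain x where x: "x \<in> {lo g..hi g}" "x \<in> {lo h..hi h}" by blast
    obtain C where C: "C \<in> S (key g)" "x \<in> {lo C..hi C}" using cover gh x(1) by blast
    have "hop_connected H 1 g C" "hop_connected H 1 C h"
      using to_cover[of g C x] to_cover[of h C x, THEN hop_connected_sym] gh C x by simp_all
    then show "hop_connected H 2 g h" by (rule hop_connected_2I)
  qed
  ultimately show ?thesis by blast
qed

locale anchored_interval_cover =
  fixes A B S :: "'v set" and lo hi pos :: "'v \<Rightarrow> 'a::linorder" and anchor :: "'v \<Rightarrow> 'v"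
  assumes finite_A: "finite A" and finite_B: "finite B" and S_subset: "S \<subseteq> A"
    and sparse: "\<And>h. h \<in> A \<Longrightarrow> card {C\<in>S. {lo C..hi C} \<inter> {lo h..hi h} \<noteq> {}} \<le> 3"
    and anchor_cover: "\<And>h p. h \<in> A \<Longrightarrow> p \<in> B \<Longrightarrow> pos p \<in> {lo h..hi h} \<Longrightarrow>
                   anchor p \<in> S \<and> pos p \<in> {lo (anchor p)..hi (anchor p)}"
begin

definition covered :: "'v set" where
  "covered = {p\<in>B. \<exists>h\<in>A. pos p \<in> {lo h..hi h}}"

definition crossing :: "'v \<Rightarrow> 'v \<Rightarrow> 'v set" where
  "crossing h C = {q\<in>B. pos q \<in> {lo h..hi h} \<and> anchor q = C}"

definition anchor_edges :: "'v set set" where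
  "anchor_edges = (\<lambda>p. {anchor p, p}) ` covered"

definition crossing_edges :: "'v set set" where
  "crossing_edges = (\<Union>h\<in>A. (\<lambda>C. {h, SOME q. q \<in> crossing h C}) ` {C\<in>S. crossing h C \<noteq> {}})"

lemma anchor_covered: "p \<in> covered \<Longrightarrow> anchor p \<in> S \<and> pos p \<in> {lo (anchor p)..hi (anchor p)}"
  unfolding covered_def using anchor_cover by blast

lemma crossing_covered: "h \<in> A \<Longrightarrow> q \<in> crossing h C \<Longrightarrow> q \<in> covered"
  unfolding crossing_def covered_def by blast

lemma card_anchor_edges: "card anchor_edges \<le> card B"
proof -
  have "covered \<subseteq> B" unfolding covered_def by blast
  then have "card anchor_edges \<le> card covered"
    unfolding anchor_edges_def by (intro card_image_le finite_subset[OF _ finite_B])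
  also have "\<dots> \<le> card B" using \<open>covered \<subseteq> B\<close> finite_B by (rule card_mono[rotated])
  finally show ?thesis .
qed

lemma card_crossing_edges: "card crossing_edges \<le> 3 * card A"
  unfolding crossing_edges_def
proof (rule card_UN_image_le[OF finite_A])
  have "finite S" using S_subset finite_A by (rule finite_subset)
  then show "finite {C\<in>S. crossing h C \<noteq> {}}" for h by simp
  fix h assume h: "h \<in> A"
  have "{C\<in>S. crossing h C \<noteq> {}} \<subseteq> {C\<in>S. {lo C..hi C} \<inter> {lo h..hi h} \<noteq> {}}"
  proof
    fix C assume "C \<in> {C\<in>S. crossing h C \<noteq> {}}"
    then obtain q where "C \<in> S" "q \<in> crossing h C" by blast
    then have "pos q \<in> {lo C..hi C} \<inter> {lo h..hi h}"
      using anchor_covered[OF crossing_covered[OF h]] unfolding crossing_def by auto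
    then show "C \<in> {C\<in>S. {lo C..hi C} \<inter> {lo h..hi h} \<noteq> {}}" using \<open>C \<in> S\<close> by blast
  qed
  then have "card {C\<in>S. crossing h C \<noteq> {}} \<le> card {C\<in>S. {lo C..hi C} \<inter> {lo h..hi h} \<noteq> {}}"
    using \<open>finite S\<close> by (intro card_mono) auto
  then show "card {C\<in>S. crossing h C \<noteq> {}} \<le> 3" using sparse[OF h] by linarith
qed

lemma edges_subset:
  "anchor_edges \<union> crossing_edges \<subseteq> {{h, p} | h p. h \<in> A \<and> p \<in> B \<and> pos p \<in> {lo h..hi h}}"
proof
  fix e assume "e \<in> anchor_edges \<union> crossing_edges"
  then consider p where "p \<in> covered" "e = {anchor p, p}"
    | h C where "h \<in> A" "crossing h C \<noteq> {}" "e = {h, SOME q. q \<in> crossing h C}"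
    unfolding anchor_edges_def crossing_edges_def by blast
  then show "e \<in> {{h, p} | h p. h \<in> A \<and> p \<in> B \<and> pos p \<in> {lo h..hi h}}"
  proof cases
    case 1
    then show ?thesis
      unfolding mem_Collect_eq using anchor_covered[of p] S_subset
      by (intro exI[of _ "anchor p"] exI[of _ p]) (auto simp: covered_def)
  next
    case 2
    then have "(SOME q. q \<in> crossing h C) \<in> crossing h C" by (simp add: some_in_eq)
    with 2 show ?thesis
      unfolding mem_Collect_eq
      by (intro exI[of _ h] exI[of _ "SOME q. q \<in> crossing h C"]) (simp add: crossing_def)
  qed
qed

lemma hop_connected_incident:
  assumes hp: "h \<in> A" "p \<in> B" "pos p \<in> {lo h..hi h}"
  shows "hop_connected (anchor_edges \<union> crossing_edges) 3 h p"
proof -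
  let ?H = "anchor_edges \<union> crossing_edges"
  define C where "C = anchor p"
  define q where "q = (SOME q. q \<in> crossing h C)"
  have "p \<in> crossing h C" using hp unfolding crossing_def C_def by simp
  then have q: "q \<in> crossing h C" unfolding q_def by (rule someI)
  have "p \<in> covered" using hp unfolding covered_def by blast
  have "q \<in> covered" using crossing_covered[OF hp(1) q] .
  have "C \<in> S" using anchor_covered[OF \<open>p \<in> covered\<close>] unfolding C_def ..
  have "anchor q = C" using q unfolding crossing_def by simp
  have "{h, q} \<in> crossing_edges"
    unfolding crossing_edges_def using hp \<open>C \<in> S\<close> q unfolding q_def by blast
  then have "hop_connected ?H 1 h q" unfolding hop_connected_1 by simp
  have "{anchor q, q} \<in> anchor_edges" "{anchor p, p} \<in> anchor_edges"
    unfolding anchor_edges_def using \<open>p \<in> covered\<close> \<open>q \<in> covered\<close> by simp_all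
  then have "hop_connected ?H 1 q C" "hop_connected ?H 1 C p"
    unfolding hop_connected_1 \<open>anchor q = C\<close> C_def by (simp_all add: insert_commute)
  then have "hop_connected ?H 2 q p" by (rule hop_connected_2I)
  from hop_connected_trans[OF \<open>hop_connected ?H 1 h q\<close> this] show ?thesis
    by (simp add: numeral_3_eq_3)
qed

end

lemma interval_point_hop_spanner:
  fixes A B :: "'v set" and lo hi pos :: "'v \<Rightarrow> 'a::linorder"
  assumes "finite A" and "finite B"
  shows "\<exists>H. is_hop_spanner {{h, p} | h p. h \<in> A \<and> p \<in> B \<and> pos p \<in> {lo h..hi h}} H 3 \<and>
             card H \<le> card B + 3 * card A"
proof -
  obtain S where cover: "interval_cover A lo hi S"
    and sparse: "\<forall>h\<in>A. card {C\<in>S. {lo C..hi C} \<inter> {lo h..hi h} \<noteq> {}} \<le> 3"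
    using sparse_interval_cover_exists[OF assms(1)] by blast
  define anchor where "anchor p = (SOME C. C \<in> S \<and> pos p \<in> {lo C..hi C})" for p
  interpret anchored_interval_cover A B S lo hi pos anchor
  proof
    show "S \<subseteq> A" using cover unfolding interval_cover_def by blast
    fix h p assume "h \<in> A" "p \<in> B" "pos p \<in> {lo h..hi h}"
    then have "\<exists>C. C \<in> S \<and> pos p \<in> {lo C..hi C}"
      using cover unfolding interval_cover_def by blast
    then show "anchor p \<in> S \<and> pos p \<in> {lo (anchor p)..hi (anchor p)}"
      unfolding anchor_def by (rule someI_ex)
  qed (use assms sparse in auto)
  have "is_hop_spanner {{h, p} | h p. h \<in> A \<and> p \<in> B \<and> pos p \<in> {lo h..hi h}}
          (anchor_edges \<union> crossing_edges) 3"
    by (rule is_hop_spanner_relI[OF edges_subset]) (blast intro: hop_connected_incident)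
  moreover have "card (anchor_edges \<union> crossing_edges) \<le> card B + 3 * card A"
    using card_Un_le[of anchor_edges crossing_edges] card_anchor_edges card_crossing_edges
    by linarith
  ultimately show ?thesis by blast
qed

section \<open>Horizontal segments and vertical lines\<close>

lemma hseg_Int_vline_iff: "hseg a b c \<inter> vline x \<noteq> {} \<longleftrightarrow> x \<in> {a..b}"
proof
  assume "hseg a b c \<inter> vline x \<noteq> {}"
  then show "x \<in> {a..b}" unfolding hseg_def vline_def by auto
next
  assume "x \<in> {a..b}"
  then have "(x, c) \<in> hseg a b c \<inter> vline x" unfolding hseg_def vline_def by auto
  then show "hseg a b c \<inter> vline x \<noteq> {}" by blast
qed

lemma hseg_Int_hseg_iff:
  "hseg a b c \<inter> hseg a' b' c' \<noteq> {} \<longleftrightarrow> c = c' \<and> {a..b} \<inter> {a'..b'} \<noteq> {}"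
proof
  assume "hseg a b c \<inter> hseg a' b' c' \<noteq> {}"
  then obtain p where "p \<in> hseg a b c" "p \<in> hseg a' b' c'" by blast
  then have "c = c'" "fst p \<in> {a..b} \<inter> {a'..b'}" unfolding hseg_def by auto
  then show "c = c' \<and> {a..b} \<inter> {a'..b'} \<noteq> {}" by blast
next
  assume "c = c' \<and> {a..b} \<inter> {a'..b'} \<noteq> {}"
  then obtain x where "c = c'" "x \<in> {a..b} \<inter> {a'..b'}" by blast
  then have "(x, c) \<in> hseg a b c \<inter> hseg a' b' c'" unfolding hseg_def by auto
  then show "hseg a b c \<inter> hseg a' b' c' \<noteq> {}" by blast
qed

lemma vline_Int_vline_iff: "vline x \<inter> vline x' \<noteq> {} \<longleftrightarrow> x = x'"
  unfolding vline_def by force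

lemma hseg_vline_Int_iff:
  assumes parts: "Vl \<inter> Vh = {}" "Vl \<union> Vh = V"
    and x: "\<forall>v\<in>Vl. obj v = vline (x v)"
    and abc: "\<forall>v\<in>Vh. obj v = hseg (a v) (b v) (c v)"
    and uv: "g \<in> V" "h \<in> V"
  shows "obj g \<inter> obj h \<noteq> {} \<longleftrightarrow>
           g \<in> Vl \<and> h \<in> Vl \<and> x g = x h \<or>
           g \<in> Vh \<and> h \<in> Vh \<and> c g = c h \<and> {a g..b g} \<inter> {a h..b h} \<noteq> {} \<or>
           g \<in> Vh \<and> h \<in> Vl \<and> x h \<in> {a g..b g} \<or>
           g \<in> Vl \<and> h \<in> Vh \<and> x g \<in> {a h..b h}"
proof -
  consider "g \<in> Vl" "h \<in> Vl" | "g \<in> Vh" "h \<in> Vh" | "g \<in> Vh" "h \<in> Vl" | "g \<in> Vl" "h \<in> Vh"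
    using uv parts(2) by blast
  then show ?thesis
  proof cases
    case 1
    then show ?thesis unfolding x[rule_format, OF 1(1)] x[rule_format, OF 1(2)] vline_Int_vline_iff using parts(1) by blast
  next
    case 2
    then show ?thesis unfolding abc[rule_format, OF 2(1)] abc[rule_format, OF 2(2)] hseg_Int_hseg_iff using parts(1) by blast
  next
    case 3
    then show ?thesis unfolding abc[rule_format, OF 3(1)] x[rule_format, OF 3(2)] hseg_Int_vline_iff using parts(1) by blast
  next
    case 4
    then show ?thesis
      unfolding x[rule_format, OF 4(1)] abc[rule_format, OF 4(2)] Int_commute[of "vline (x g)"] hseg_Int_vline_iff
      using parts(1) by blast
  qed
qed

lemma intersection_graph_hseg_vline:
  assumes parts: "Vl \<inter> Vh = {}" "Vl \<union> Vh = V"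
    and x: "\<forall>v\<in>Vl. obj v = vline (x v)"
    and abc: "\<forall>v\<in>Vh. obj v = hseg (a v) (b v) (c v)"
  shows "intersection_graph V obj =
           {{u, v} | u v. u \<in> Vl \<and> v \<in> Vl \<and> u \<noteq> v \<and> x u = x v} \<union>
           {{g, h} | g h. g \<in> Vh \<and> h \<in> Vh \<and> g \<noteq> h \<and> c g = c h \<and> {a g..b g} \<inter> {a h..b h} \<noteq> {}} \<union>
           {{h, p} | h p. h \<in> Vh \<and> p \<in> Vl \<and> x p \<in> {a h..b h}}"
    (is "_ = ?E_vv \<union> ?E_hh \<union> ?E_hv")
proof (intro equalityI subsetI)
  note meet = hseg_vline_Int_iff[OF parts x abc]
  fix e assume "e \<in> intersection_graph V obj"
  then obtain u v where e: "e = {u, v}" and uv: "u \<in> V" "v \<in> V" "u \<noteq> v" "obj u \<inter> obj v \<noteq> {}"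
    unfolding intersection_graph_def by blast
  from uv(4) consider "u \<in> Vl" "v \<in> Vl" "x u = x v"
    | "u \<in> Vh" "v \<in> Vh" "c u = c v" "{a u..b u} \<inter> {a v..b v} \<noteq> {}"
    | "u \<in> Vh" "v \<in> Vl" "x v \<in> {a u..b u}" | "u \<in> Vl" "v \<in> Vh" "x u \<in> {a v..b v}"
    unfolding meet[OF uv(1,2)] by blast
  then show "e \<in> ?E_vv \<union> ?E_hh \<union> ?E_hv"
  proof cases
    case 4
    then have "{v, u} \<in> ?E_hv" by blast
    then show ?thesis unfolding e by (simp add: insert_commute)
  qed (use uv(3) in \<open>unfold e, blast+\<close>)
next
  note meet = hseg_vline_Int_iff[OF parts x abc]
  fix e assume "e \<in> ?E_vv \<union> ?E_hh \<union> ?E_hv"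
  then obtain u v where "e = {u, v}" "u \<in> V" "v \<in> V" "u \<noteq> v"
    and "u \<in> Vl \<and> v \<in> Vl \<and> x u = x v \<or>
         u \<in> Vh \<and> v \<in> Vh \<and> c u = c v \<and> {a u..b u} \<inter> {a v..b v} \<noteq> {} \<or>
         u \<in> Vh \<and> v \<in> Vl \<and> x v \<in> {a u..b u}"
    using parts by blast
  then show "e \<in> intersection_graph V obj"
    unfolding intersection_graph_def using meet by blast
qed

lemma hseg_vline_hop_spanner:
  fixes V :: "'v set" and obj :: "'v \<Rightarrow> (real \<times> real) set"
  assumes finV: "finite V" and objs: "\<forall>v\<in>V. hseg_or_vline (obj v)"
  shows "\<exists>H. is_hop_spanner (intersection_graph V obj) H 3 \<and> card H \<le> 6 * card V"
proof -
  define Vl where "Vl = {v\<in>V. \<exists>x. obj v = vline x}"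
  define Vh where "Vh = V - Vl"
  have "\<forall>v\<in>Vl. \<exists>x. obj v = vline x" unfolding Vl_def by blast
  then obtain x where x: "\<forall>v\<in>Vl. obj v = vline (x v)" by (rule bchoice[THEN exE])
  have "\<forall>v\<in>Vh. \<exists>t. obj v = hseg (fst t) (fst (snd t)) (snd (snd t))"
    using objs unfolding Vh_def Vl_def hseg_or_vline_def by fastforce
  then obtain t where "\<forall>v\<in>Vh. obj v = hseg (fst (t v)) (fst (snd (t v))) (snd (snd (t v)))"
    by (rule bchoice[THEN exE])
  then have "\<exists>a b c. \<forall>v\<in>Vh. obj v = hseg (a v) (b v) (c v)"
    by (intro exI[of _ "\<lambda>v. fst (t v)"] exI[of _ "\<lambda>v. fst (snd (t v))"] exI[of _ "\<lambda>v. snd (snd (t v))"])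
      simp
  then obtain a b c where abc: "\<forall>v\<in>Vh. obj v = hseg (a v) (b v) (c v)" by blast
  have fin: "finite Vl" "finite Vh" unfolding Vl_def Vh_def using finV by auto
  have VlVh: "Vl \<inter> Vh = {}" "Vl \<union> Vh = V" unfolding Vl_def Vh_def by auto
  define E_vv where "E_vv = {{u, v} | u v. u \<in> Vl \<and> v \<in> Vl \<and> u \<noteq> v \<and> x u = x v}"
  define E_hh where "E_hh = {{g, h} | g h. g \<in> Vh \<and> h \<in> Vh \<and> g \<noteq> h \<and> c g = c h \<and>
                                        {a g..b g} \<inter> {a h..b h} \<noteq> {}}"
  define E_hv where "E_hv = {{h, p} | h p. h \<in> Vh \<and> p \<in> Vl \<and> x p \<in> {a h..b h}}"
  have "intersection_graph V obj = E_vv \<union> E_hh \<union> E_hv"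
    unfolding E_vv_def E_hh_def E_hv_def
    by (rule intersection_graph_hseg_vline[OF VlVh x abc])
  moreover obtain H_vv where "is_hop_spanner E_vv H_vv 2" "card H_vv \<le> card Vl"
    unfolding E_vv_def using same_key_hop_spanner[OF fin(1)] by blast
  moreover obtain H_hh where "is_hop_spanner E_hh H_hh 2" "card H_hh \<le> 3 * card Vh"
    unfolding E_hh_def using overlapping_intervals_hop_spanner[OF fin(2)] by blast
  moreover obtain H_hv where "is_hop_spanner E_hv H_hv 3" "card H_hv \<le> card Vl + 3 * card Vh"
    unfolding E_hv_def using interval_point_hop_spanner[OF fin(2) fin(1)] by blast
  ultimately have "is_hop_spanner (intersection_graph V obj) (H_vv \<union> H_hh \<union> H_hv) 3"
    and "card (H_vv \<union> H_hh \<union> H_hv) \<le> 6 * card V"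
    using card_Un_le[of "H_vv \<union> H_hh" H_hv] card_Un_le[of H_vv H_hh]
      card_Un_disjoint[OF fin VlVh(1)] VlVh(2)
    by (auto intro!: is_hop_spanner_Un elim!: is_hop_spanner_mono)
  then show ?thesis by blast
qed

theorem lemma18:
  shows "\<exists>C::real. \<forall>(V::nat set) (obj :: nat \<Rightarrow> (real \<times> real) set).
           finite V \<and> (\<forall>v\<in>V. hseg_or_vline (obj v)) \<longrightarrow>
           (\<exists>H. is_hop_spanner (intersection_graph V obj) H 3 \<and>
                real (card H) \<le> C * real (card V))"
proof (intro exI[of _ 6] allI impI)
  fix V :: "nat set" and obj :: "nat \<Rightarrow> (real \<times> real) set"
  assume "finite V \<and> (\<forall>v\<in>V. hseg_or_vline (obj v))"
  then obtain H where "is_hop_spanner (intersection_graph V obj) H 3" "card H \<le> 6 * card V"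
    using hseg_vline_hop_spanner by blast
  then show "\<exists>H. is_hop_spanner (intersection_graph V obj) H 3 \<and> real (card H) \<le> 6 * real (card V)"
    by (intro exI[of _ H]) (simp add: of_nat_le_iff[symmetric])
qed

end
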